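(* Let $X$ be an infinite dimensional normed space over $\mathbb{K}=\mathbb{R}$ or $\mathbb{C}$. If $(x_n)_{n=1}^\infty$ is a linearly independent sequence in $X$ such that $\inf_{n\in\mathbb{N}}\|x_n\|_X>0$, then for any infinite dimensional subspace $\mathcal{S}$ of $\ell_\infty$ properly containing $c_0$, there is no subset of $X$ that is $[(x_n)_{n=1}^\infty,\mathcal{S}]$-lineable.
   Context: $\ell_\infty$ is the space of bounded scalar sequences and $c_0$ the space of scalar sequences converging to $0$, both viewed as subspaces of $\mathbb{K}^{\mathbb{N}}$. For a subspace $\mathcal{S}$ of $\mathbb{K}^{\mathbb{N}}$ and a sequence $(x_n)$ in $X$, a subset $A\subset X$ is $[(x_n)_{n=1}^\infty,\mathcal{S}]$-lineable if for each $(c_n)_{n=1}^\infty\in\mathcal{S}$ the series $\sum_{n=1}^\infty c_nx_n$ converges in $X$ to a vector of $A\cup\{0\}$. *)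

theory Defs
  imports "HOL-Analysis.Analysis" "HOL-Library.Function_Algebras"
begin

text \<open>Scalar sequences (elements of K^N), indexed by nat (index 0 plays the role of 1).\<close>

definition ell_infty :: "(nat \<Rightarrow> 'k::real_normed_field) set" where
  "ell_infty = {c. bounded (range c)}"

definition c_zero :: "(nat \<Rightarrow> 'k::real_normed_field) set" where
  "c_zero = {c. c \<longlonglongrightarrow> 0}"

definition seq_subspace :: "(nat \<Rightarrow> 'k::field) set \<Rightarrow> bool" where
  "seq_subspace S \<longleftrightarrow> (\<lambda>n. 0) \<in> S \<and> (\<forall>f\<in>S. \<forall>g\<in>S. (\<lambda>n. f n + g n) \<in> S)
     \<and> (\<forall>a. \<forall>f\<in>S. (\<lambda>n. a * f n) \<in> S)"

definition lin_indep_fam :: "('k::field \<Rightarrow> 'x::ab_group_add \<Rightarrow> 'x) \<Rightarrow> nat \<Rightarrow> (nat \<Rightarrow> 'x) \<Rightarrow> bool" where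
  "lin_indep_fam smul m v \<longleftrightarrow>
     (\<forall>a. (\<Sum>i<m. smul (a i) (v i)) = 0 \<longrightarrow> (\<forall>i<m. a i = 0))"

definition infinite_dim_seqs :: "(nat \<Rightarrow> 'k::field) set \<Rightarrow> bool" where
  "infinite_dim_seqs S \<longleftrightarrow>
     (\<forall>m. \<exists>v. (\<forall>i<m. v i \<in> S) \<and> lin_indep_fam (\<lambda>a f n. a * f n) m v)"

definition infinite_dim_space :: "('k::field \<Rightarrow> 'x::ab_group_add \<Rightarrow> 'x) \<Rightarrow> bool" where
  "infinite_dim_space smul \<longleftrightarrow> (\<forall>m. \<exists>v. lin_indep_fam smul m v)"

text \<open>A sequence is linearly independent: every finite initial segment is
  (equivalently every finite subfamily is).\<close>
definition lin_indep_seq :: "('k::field \<Rightarrow> 'x::ab_group_add \<Rightarrow> 'x) \<Rightarrow> (nat \<Rightarrow> 'x) \<Rightarrow> bool" where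
  "lin_indep_seq smul x \<longleftrightarrow> (\<forall>m. lin_indep_fam smul m x)"

text \<open>smul makes the real normed vector space 'x a normed space over the normed field 'k
  (compatible with the real structure).\<close>
definition normed_space_over :: "('k::real_normed_field \<Rightarrow> 'x::real_normed_vector \<Rightarrow> 'x) \<Rightarrow> bool" where
  "normed_space_over smul \<longleftrightarrow>
     (\<forall>a x y. smul a (x + y) = smul a x + smul a y) \<and>
     (\<forall>a b x. smul (a + b) x = smul a x + smul b x) \<and>
     (\<forall>a b x. smul (a * b) x = smul a (smul b x)) \<and>
     (\<forall>x. smul 1 x = x) \<and>
     (\<forall>r x. smul (of_real r) x = scaleR r x) \<and>
     (\<forall>a x. norm (smul a x) = norm a * norm x)"

definition seq_lineable ::
  "('k \<Rightarrow> 'x::real_normed_vector \<Rightarrow> 'x) \<Rightarrow> 'x set \<Rightarrow> (nat \<Rightarrow> 'x) \<Rightarrow> (nat \<Rightarrow> 'k) set \<Rightarrow> bool" where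
  "seq_lineable smul A x S \<longleftrightarrow>
     (\<forall>c\<in>S. \<exists>y\<in>A \<union> {0}. (\<lambda>n. smul (c n) (x n)) sums y)"

end

theory Submission
  imports Defs
begin

text \<open>If \<open>\<Sum> c\<^sub>n x\<^sub>n\<close> converges, its terms tend to \<open>0\<close>; since
  \<open>\<parallel>c\<^sub>n x\<^sub>n\<parallel> = \<bar>c\<^sub>n\<bar> \<parallel>x\<^sub>n\<parallel> \<ge> \<bar>c\<^sub>n\<bar> inf\<^sub>k \<parallel>x\<^sub>k\<parallel>\<close>
  with a positive infimum, \<open>c\<close> must lie in \<open>c\<^sub>0\<close>. So no set is lineable once \<open>S\<close> contains a
  sequence outside \<open>c\<^sub>0\<close>.\<close>

lemma coeffs_tendsto_zero_if_summable:
  fixes smul :: "'k::real_normed_field \<Rightarrow> 'x::real_normed_vector \<Rightarrow> 'x"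
  assumes norm_smul: "\<And>a v. norm (smul a v) = norm a * norm v"
    and d_pos: "d > 0" and d_le: "\<And>n. d \<le> norm (x n)"
    and summable: "summable (\<lambda>n. smul (c n) (x n))"
  shows "c \<longlonglongrightarrow> 0"
proof (rule Lim_null_comparison)
  have "(\<lambda>n. smul (c n) (x n)) \<longlonglongrightarrow> 0"
    using summable by (rule summable_LIMSEQ_zero)
  then show "(\<lambda>n. norm (smul (c n) (x n)) / d) \<longlonglongrightarrow> 0"
    using tendsto_divide_zero tendsto_norm_zero by blast
  have "norm (c n) * d \<le> norm (smul (c n) (x n))" for n
    using d_le[of n] by (simp add: norm_smul mult_left_mono)
  then show "\<forall>\<^sub>F n in sequentially. norm (c n) \<le> norm (smul (c n) (x n)) / d"
    using d_pos by (simp add: pos_le_divide_eq)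
qed

lemma not_seq_lineable_if_not_subset_c_zero:
  fixes smul :: "'k::real_normed_field \<Rightarrow> 'x::real_normed_vector \<Rightarrow> 'x"
  assumes norm_smul: "\<And>a v. norm (smul a v) = norm a * norm v"
    and inf_pos: "(INF n. norm (x n)) > 0" and not_c_zero: "\<not> S \<subseteq> c_zero"
  shows "\<not> seq_lineable smul A x S"
proof
  assume "seq_lineable smul A x S"
  obtain c where "c \<in> S" and "c \<notin> c_zero"
    using not_c_zero by blast
  with \<open>seq_lineable smul A x S\<close> have "summable (\<lambda>n. smul (c n) (x n))"
    unfolding seq_lineable_def summable_def by blast
  moreover have "(INF k. norm (x k)) \<le> norm (x n)" for n
    by (rule cINF_lower) (auto intro: bdd_belowI[of _ 0])
  ultimately have "c \<longlonglongrightarrow> 0"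
    using coeffs_tendsto_zero_if_summable[OF norm_smul inf_pos] by blast
  with \<open>c \<notin> c_zero\<close> show False
    unfolding c_zero_def by simp
qed

theorem mainTheorem3:
  shows
   "(\<forall>(x :: nat \<Rightarrow> 'a::real_normed_vector) (S :: (nat \<Rightarrow> real) set).
       infinite_dim_space (scaleR :: real \<Rightarrow> 'a \<Rightarrow> 'a) \<and>
       lin_indep_seq scaleR x \<and> (INF n. norm (x n)) > 0 \<and>
       seq_subspace S \<and> infinite_dim_seqs S \<and> S \<subseteq> ell_infty \<and> c_zero \<subset> S
       \<longrightarrow> \<not> (\<exists>A. seq_lineable scaleR A x S))
  \<and> (\<forall>(smul :: complex \<Rightarrow> 'b::real_normed_vector \<Rightarrow> 'b) (x :: nat \<Rightarrow> 'b)
       (S :: (nat \<Rightarrow> complex) set).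
       normed_space_over smul \<and> infinite_dim_space smul \<and>
       lin_indep_seq smul x \<and> (INF n. norm (x n)) > 0 \<and>
       seq_subspace S \<and> infinite_dim_seqs S \<and> S \<subseteq> ell_infty \<and> c_zero \<subset> S
       \<longrightarrow> \<not> (\<exists>A. seq_lineable smul A x S))"
proof (intro conjI allI impI notI; elim conjE exE)
  fix x :: "nat \<Rightarrow> 'a" and S :: "(nat \<Rightarrow> real) set" and A
  assume "(INF n. norm (x n)) > 0" "c_zero \<subset> S" "seq_lineable scaleR A x S"
  then show False
    using not_seq_lineable_if_not_subset_c_zero[of scaleR x S] by auto
next
  fix smul :: "complex \<Rightarrow> 'b \<Rightarrow> 'b" and x :: "nat \<Rightarrow> 'b" and S :: "(nat \<Rightarrow> complex) set" and A
  assume "normed_space_over smul" "(INF n. norm (x n)) > 0" "c_zero \<subset> S"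
    "seq_lineable smul A x S"
  then show False
    using not_seq_lineable_if_not_subset_c_zero[of smul x S]
    by (auto simp: normed_space_over_def)
qed

end
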